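(* There is an absolute constant $C>0$ such that for all $k\ge 2$, $\gamma\in(0,1]$, $\varepsilon\in(0,1]$ and $n\ge C\,k^3/(\gamma^2\varepsilon^4)$, there exists a symmetric private-coin $\varepsilon$-LDP protocol with $n$ users, each holding an i.i.d. sample from an unknown $p\in\Delta([k]\times[k])$, whose curator outputs ``independent'' with probability at least $2/3$ if $p$ is a product distribution and ``not independent'' with probability at least $2/3$ if $p$ is $\gamma$-far from every product distribution.
   Context: $\Delta(\Omega)$ is the set of probability distributions on a finite set $\Omega$; $d_{TV}(p,q)=\frac12\|p-q\|_1$. A distribution on $[k]\times[k]$ is a product distribution if it equals $p_1\otimes p_2$, $(p_1\otimes p_2)(x_1,x_2)=p_1(x_1)p_2(x_2)$, for some $p_1,p_2\in\Delta([k])$; $p$ is $\gamma$-far from product if $d_{TV}(p,q)>\gamma$ for every product distribution $q$. Protocol model: user $j$ holds $X_j$, $X_1,\dots,X_n$ i.i.d. from $p$; each user sends $Z_j\sim W(\cdot\mid X_j)$ for a channel $W$ into a finite set, independently across users (private-coin, symmetric: the same $W$ for all users), and the curator outputs a possibly randomized function of $(Z_1,\dots,Z_n)$. $\varepsilon$-LDP means $W(z\mid x)\le e^\varepsilon W(z\mid x')$ for all $z,x,x'$. *)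

theory Defs
  imports Complex_Main
begin

text \<open>The alphabet [k] is rendered as {0..<k}. A probability distribution on a finite
set A is a real function, nonnegative on A and summing to 1 over A (values off A irrelevant).\<close>

definition is_dist :: "'a set \<Rightarrow> ('a \<Rightarrow> real) \<Rightarrow> bool" where
  "is_dist A p \<longleftrightarrow> (\<forall>x\<in>A. 0 \<le> p x) \<and> (\<Sum>x\<in>A. p x) = 1"

abbreviation sq :: "nat \<Rightarrow> (nat \<times> nat) set" where
  "sq k \<equiv> {0..<k} \<times> {0..<k}"

definition dtv :: "'a set \<Rightarrow> ('a \<Rightarrow> real) \<Rightarrow> ('a \<Rightarrow> real) \<Rightarrow> real" where
  "dtv A p q = (1/2) * (\<Sum>x\<in>A. \<bar>p x - q x\<bar>)"

definition is_product :: "nat \<Rightarrow> (nat \<times> nat \<Rightarrow> real) \<Rightarrow> bool" where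
  "is_product k p \<longleftrightarrow> (\<exists>p1 p2. is_dist {0..<k} p1 \<and> is_dist {0..<k} p2 \<and>
      (\<forall>x1\<in>{0..<k}. \<forall>x2\<in>{0..<k}. p (x1, x2) = p1 x1 * p2 x2))"

definition far_from_product :: "nat \<Rightarrow> real \<Rightarrow> (nat \<times> nat \<Rightarrow> real) \<Rightarrow> bool" where
  "far_from_product k \<gamma> p \<longleftrightarrow>
     (\<forall>q. is_dist (sq k) q \<and> is_product k q \<longrightarrow> dtv (sq k) p q > \<gamma>)"

definition is_channel :: "'x set \<Rightarrow> 'z set \<Rightarrow> ('x \<Rightarrow> 'z \<Rightarrow> real) \<Rightarrow> bool" where
  "is_channel X Z W \<longleftrightarrow> finite Z \<and> (\<forall>x\<in>X. is_dist Z (W x))"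

definition is_LDP :: "real \<Rightarrow> 'x set \<Rightarrow> 'z set \<Rightarrow> ('x \<Rightarrow> 'z \<Rightarrow> real) \<Rightarrow> bool" where
  "is_LDP \<epsilon> X Z W \<longleftrightarrow> (\<forall>z\<in>Z. \<forall>x\<in>X. \<forall>x'\<in>X. W x z \<le> exp \<epsilon> * W x' z)"

definition tuples :: "nat \<Rightarrow> 'a set \<Rightarrow> 'a list set" where
  "tuples n A = {xs. length xs = n \<and> set xs \<subseteq> A}"

text \<open>Probability that the curator outputs ``independent'' when n users hold i.i.d.
  samples X_1..X_n from p, each user j independently (private coins) sends Z_j drawn from
  W(.|X_j) (the same W for every user), and the curator, seeing (Z_1,...,Z_n), outputs
  ``independent'' with probability f(Z_1,...,Z_n) (a randomized curator).\<close>
definition accept_prob ::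
  "nat \<Rightarrow> 'x set \<Rightarrow> 'z set \<Rightarrow> ('x \<Rightarrow> real) \<Rightarrow> ('x \<Rightarrow> 'z \<Rightarrow> real) \<Rightarrow> ('z list \<Rightarrow> real) \<Rightarrow> real" where
  "accept_prob n X Z p W f =
     (\<Sum>xs\<in>tuples n X. \<Sum>zs\<in>tuples n Z.
        (\<Prod>j<n. p (xs ! j) * W (xs ! j) (zs ! j)) * f zs)"

end

theory Submission
  imports Defs "HOL-Library.Countable" "HOL-Analysis.Convex"
begin

text \<open>Each user applies randomized response, keeping each bit with probability \<open>r / (1 + r)\<close> for
  \<open>r = exp (\<epsilon> / 6)\<close>, to the \<open>k\<^sup>2 + 2 k\<close> bits of the one-hot encodings of its sample, of the
  sample's row and of its column. Two samples differ in at most six of these bits, so the channel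
  is \<open>\<epsilon>\<close>-LDP. Debiasing the bits of three users gives a vector \<open>V\<close> whose mean is \<open>p - p\<^sub>1 \<otimes> p\<^sub>2\<close>
  and whose second-moment matrix is at most \<open>\<beta> = O(1 / \<epsilon>\<^sup>4)\<close> times the identity. For \<open>m = n div 3\<close>
  such triples, the U-statistic \<open>T = (\<Sum>g \<noteq> h. \<langle>V g, V h\<rangle>)\<close> has mean \<open>m (m - 1) \<parallel>p - p\<^sub>1 \<otimes> p\<^sub>2\<parallel>\<^sup>2\<close>,
  which vanishes for product distributions and, by Cauchy-Schwarz, is at least
  \<open>m (m - 1) 4 \<gamma>\<^sup>2 / k\<^sup>2\<close> when \<open>p\<close> is \<open>\<gamma>\<close>-far from product. The variance of \<open>T\<close> is
  \<open>O(m\<^sup>3 \<beta> \<parallel>p - p\<^sub>1 \<otimes> p\<^sub>2\<parallel>\<^sup>2 + m\<^sup>2 \<beta>\<^sup>2 k\<^sup>2)\<close>, so Chebyshev's inequality at the threshold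
  \<open>m (m - 1) 2 \<gamma>\<^sup>2 / k\<^sup>2\<close> separates the two cases once \<open>m - 1 \<ge> 48 \<beta> k\<^sup>3 / \<gamma>\<^sup>2\<close>.\<close>

section \<open>Weighted sums over tuples\<close>

lemma finite_tuples [simp]: "finite A \<Longrightarrow> finite (tuples n A)"
  unfolding tuples_def using finite_lists_length_eq[of A n] by (simp add: conj_commute)

lemma tuples_0 [simp]: "tuples 0 A = {[]}"
  by (auto simp: tuples_def)

lemma tuples_Suc: "tuples (Suc n) A = (\<lambda>(a, xs). a # xs) ` (A \<times> tuples n A)"
proof -
  have "xs \<in> (\<lambda>(a, xs). a # xs) ` (A \<times> tuples n A)" if "xs \<in> tuples (Suc n) A" for xs
    using that by (cases xs) (auto simp: tuples_def)
  then show ?thesis by (auto simp: tuples_def)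
qed

lemma sum_tuples_Suc:
  "(\<Sum>xs\<in>tuples (Suc n) A. G xs) = (\<Sum>a\<in>A. \<Sum>xs\<in>tuples n A. G (a # xs))"
proof -
  have "inj_on (\<lambda>(a, xs). a # xs) (A \<times> tuples n A)"
    by (auto simp: inj_on_def)
  then have "(\<Sum>xs\<in>tuples (Suc n) A. G xs) = (\<Sum>(a, xs)\<in>A \<times> tuples n A. G (a # xs))"
    unfolding tuples_Suc by (simp add: sum.reindex split_def)
  then show ?thesis
    by (simp add: sum.cartesian_product split_def)
qed

lemma sum_tuples_prod:
  assumes "finite A"
  shows "(\<Sum>xs\<in>tuples n A. \<Prod>j<n. h j (xs ! j)) = (\<Prod>j<n. \<Sum>a\<in>A. (h j a :: real))"
proof (induction n arbitrary: h)
  case 0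
  then show ?case by simp
next
  case (Suc n)
  have "(\<Sum>xs\<in>tuples (Suc n) A. \<Prod>j<Suc n. h j (xs ! j))
      = (\<Sum>a\<in>A. h 0 a * (\<Sum>xs\<in>tuples n A. \<Prod>j<n. h (Suc j) (xs ! j)))"
    by (simp add: sum_tuples_Suc prod.lessThan_Suc_shift sum_distrib_left del: prod.lessThan_Suc)
  also have "\<dots> = (\<Prod>j<Suc n. \<Sum>a\<in>A. h j a)"
    by (simp add: Suc.IH[of "\<lambda>j. h (Suc j)"] prod.lessThan_Suc_shift sum_distrib_right
        del: prod.lessThan_Suc)
  finally show ?case .
qed

definition expect :: "'a set \<Rightarrow> ('a \<Rightarrow> real) \<Rightarrow> ('a \<Rightarrow> real) \<Rightarrow> real" where
  "expect A w G = (\<Sum>x\<in>A. w x * G x)"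

lemma expect_cong: "(\<And>x. x \<in> A \<Longrightarrow> G x = H x) \<Longrightarrow> expect A w G = expect A w H"
  by (simp add: expect_def)

lemma expect_add: "expect A w (\<lambda>x. G x + H x) = expect A w G + expect A w H"
  by (simp add: expect_def distrib_left sum.distrib)

lemma expect_diff: "expect A w (\<lambda>x. G x - H x) = expect A w G - expect A w H"
  by (simp add: expect_def right_diff_distrib sum_subtractf)

lemma expect_cmult: "expect A w (\<lambda>x. c * G x) = c * expect A w G"
  by (simp add: expect_def sum_distrib_left mult_ac)

lemma expect_mult_right: "expect A w (\<lambda>x. G x * c) = expect A w G * c"
  by (simp add: expect_def sum_distrib_right mult.assoc)

lemma expect_sum: "finite S \<Longrightarrow> expect A w (\<lambda>x. \<Sum>s\<in>S. G s x) = (\<Sum>s\<in>S. expect A w (G s))"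
  by (simp add: expect_def sum_distrib_left sum.swap[of _ S])

lemma expect_const: "sum w A = 1 \<Longrightarrow> expect A w (\<lambda>_. c) = c"
  by (simp add: expect_def flip: sum_distrib_right)

lemma expect_mono:
  "(\<And>x. x \<in> A \<Longrightarrow> 0 \<le> w x) \<Longrightarrow> (\<And>x. x \<in> A \<Longrightarrow> G x \<le> H x) \<Longrightarrow> expect A w G \<le> expect A w H"
  unfolding expect_def by (intro sum_mono mult_left_mono) auto

lemma expect_nonneg:
  "(\<And>x. x \<in> A \<Longrightarrow> 0 \<le> w x) \<Longrightarrow> (\<And>x. x \<in> A \<Longrightarrow> 0 \<le> G x) \<Longrightarrow> 0 \<le> expect A w G"
  using expect_mono[of A w "\<lambda>_. 0" G] by (simp add: expect_def)

lemma expect_le_const: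
  assumes "\<And>x. x \<in> A \<Longrightarrow> 0 \<le> w x" and "sum w A = 1" and "\<And>x. x \<in> A \<Longrightarrow> G x \<le> c"
  shows "expect A w G \<le> c"
  using expect_mono[of A w G "\<lambda>_. c"] assms by (simp add: expect_const)

lemma chebyshev:
  assumes w: "\<And>x. x \<in> A \<Longrightarrow> 0 \<le> w x" and s: "0 < s"
    and far: "\<And>x. P x \<Longrightarrow> s \<le> \<bar>T x - t\<bar>"
  shows "expect A w (\<lambda>x. of_bool (P x)) \<le> expect A w (\<lambda>x. (T x - t)\<^sup>2) / s\<^sup>2"
proof -
  have "of_bool (P x) \<le> (T x - t)\<^sup>2 / s\<^sup>2" for x
  proof (cases "P x")
    case True
    then have "s\<^sup>2 \<le> \<bar>T x - t\<bar>\<^sup>2"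
      using far s by (intro power_mono) auto
    then show ?thesis using True s by simp
  qed simp
  then have "expect A w (\<lambda>x. of_bool (P x)) \<le> expect A w (\<lambda>x. (T x - t)\<^sup>2 / s\<^sup>2)"
    by (intro expect_mono w)
  then show ?thesis by (simp add: expect_def sum_divide_distrib)
qed

lemma expect_tuples_prod:
  assumes "finite A" and "\<And>j. j < n \<Longrightarrow> sum (w j) A = 1" and "J \<subseteq> {..<n}"
  shows "expect (tuples n A) (\<lambda>xs. \<Prod>j<n. w j (xs ! j)) (\<lambda>xs. \<Prod>j\<in>J. g j (xs ! j))
       = (\<Prod>j\<in>J. expect A (w j) (g j))"
proof -
  let ?g = "\<lambda>j a. if j \<in> J then g j a else 1"
  have J: "{..<n} \<inter> J = J" using assms(3) by auto
  have "(\<Prod>j\<in>J. g j (xs ! j)) = (\<Prod>j<n. ?g j (xs ! j))" for xs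
    by (simp add: prod.inter_restrict[symmetric] J)
  then have "expect (tuples n A) (\<lambda>xs. \<Prod>j<n. w j (xs ! j)) (\<lambda>xs. \<Prod>j\<in>J. g j (xs ! j))
      = (\<Sum>xs\<in>tuples n A. \<Prod>j<n. w j (xs ! j) * ?g j (xs ! j))"
    by (simp add: expect_def prod.distrib)
  also have "\<dots> = (\<Prod>j<n. expect A (w j) (?g j))"
    using sum_tuples_prod[OF assms(1), of "\<lambda>j a. w j a * ?g j a"] by (simp add: expect_def)
  also have "\<dots> = (\<Prod>j<n. if j \<in> J then expect A (w j) (g j) else 1)"
    by (rule prod.cong) (auto simp: expect_def assms(2))
  also have "\<dots> = (\<Prod>j\<in>J. expect A (w j) (g j))"
    by (simp add: prod.inter_restrict[symmetric] J)
  finally show ?thesis .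
qed

lemma accept_prob_eq_expect:
  assumes "finite X"
  shows "accept_prob n X Z p W f
       = expect (tuples n Z) (\<lambda>zs. \<Prod>j<n. \<Sum>x\<in>X. p x * W x (zs ! j)) f"
proof -
  have "(\<Sum>xs\<in>tuples n X. \<Prod>j<n. p (xs ! j) * W (xs ! j) (zs ! j))
      = (\<Prod>j<n. \<Sum>x\<in>X. p x * W x (zs ! j))" for zs
    by (rule sum_tuples_prod[OF assms, where h = "\<lambda>j x. p x * W x (zs ! j)"])
  then show ?thesis
    unfolding accept_prob_def expect_def by (subst sum.swap) (simp add: flip: sum_distrib_right)
qed

definition triples :: "nat \<Rightarrow> 'a list \<Rightarrow> ('a \<times> 'a \<times> 'a) list" where
  "triples m zs = map (\<lambda>g. (zs ! (3 * g), zs ! (3 * g + 1), zs ! (3 * g + 2))) [0..<m]"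

lemma triples_0 [simp]: "triples 0 zs = []"
  by (simp add: triples_def)

lemma triples_Suc: "triples (Suc m) (a # b # c # zs) = (a, b, c) # triples m zs"
proof -
  have "[0..<Suc m] = 0 # map Suc [0..<m]"
    by (simp add: upt_conv_Cons map_Suc_upt del: upt_Suc)
  then show ?thesis by (simp add: triples_def numeral_3_eq_3)
qed

lemma expect_triples:
  assumes "finite Z" and "sum mu Z = 1" and "3 * m \<le> n"
  shows "expect (tuples n Z) (\<lambda>zs. \<Prod>j<n. mu (zs ! j)) (\<lambda>zs. F (triples m zs))
       = expect (tuples m (Z \<times> Z \<times> Z)) (\<lambda>ws. \<Prod>g<m. (\<lambda>(a, b, c). mu a * mu b * mu c) (ws ! g)) F"
  using assms(3)
proof (induction m arbitrary: n F)
  case 0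
  show ?case
    using expect_tuples_prod[OF assms(1), of n "\<lambda>_. mu" "{}"] assms(2)
    by (simp add: expect_def flip: sum_distrib_right)
next
  case (Suc m)
  define n' where "n' = n - 3"
  have n: "n = Suc (Suc (Suc n'))" and mn': "3 * m \<le> n'"
    using Suc.prems by (auto simp: n'_def)
  let ?w = "\<lambda>(a, b, c). mu a * mu b * mu c"
  let ?Ew = "\<lambda>m. expect (tuples m (Z \<times> Z \<times> Z)) (\<lambda>ws. \<Prod>g<m. ?w (ws ! g))"
  have weight: "(\<Prod>j<Suc (Suc (Suc n')). mu ((a # b # c # zs) ! j))
      = mu a * mu b * mu c * (\<Prod>j<n'. mu (zs ! j))" for a b c zs
    by (simp add: prod.lessThan_Suc_shift del: prod.lessThan_Suc)
  have "expect (tuples n Z) (\<lambda>zs. \<Prod>j<n. mu (zs ! j)) (\<lambda>zs. F (triples (Suc m) zs))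
     = (\<Sum>a\<in>Z. \<Sum>b\<in>Z. \<Sum>c\<in>Z. mu a * mu b * mu c *
          expect (tuples n' Z) (\<lambda>zs. \<Prod>j<n'. mu (zs ! j)) (\<lambda>zs. F ((a, b, c) # triples m zs)))"
    unfolding n expect_def
    by (simp only: sum_tuples_Suc weight triples_Suc sum_distrib_left mult.assoc)
  also have "\<dots> = (\<Sum>a\<in>Z. \<Sum>b\<in>Z. \<Sum>c\<in>Z. mu a * mu b * mu c * ?Ew m (\<lambda>ws. F ((a, b, c) # ws)))"
    using Suc.IH[OF mn', of "\<lambda>ws. F ((_, _, _) # ws)"] by simp
  also have "\<dots> = ?Ew (Suc m) F"
    unfolding expect_def
    by (simp only: sum_tuples_Suc sum.cartesian_product' case_prod_conv prod.lessThan_Suc_shift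
        sum_distrib_left mult.assoc nth_Cons_0 nth_Cons_Suc)
  finally show ?case .
qed

section \<open>A U-statistic of i.i.d. vectors\<close>

locale iid_sample =
  fixes Om :: "'w set" and nu :: "'w \<Rightarrow> real" and m :: nat
  assumes finite_Om: "finite Om" and sum_nu: "sum nu Om = 1"
    and nu_nonneg: "\<And>w. w \<in> Om \<Longrightarrow> 0 \<le> nu w"
begin

abbreviation E1 :: "('w \<Rightarrow> real) \<Rightarrow> real" where
  "E1 \<equiv> expect Om nu"

abbreviation EE :: "('w list \<Rightarrow> real) \<Rightarrow> real" where
  "EE \<equiv> expect (tuples m Om) (\<lambda>ws. \<Prod>g<m. nu (ws ! g))"

lemma EE_prod: "J \<subseteq> {..<m} \<Longrightarrow> EE (\<lambda>ws. \<Prod>j\<in>J. a j (ws ! j)) = (\<Prod>j\<in>J. E1 (a j))"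
  using expect_tuples_prod[OF finite_Om, of m "\<lambda>_. nu"] sum_nu by simp

lemma EE_const: "EE (\<lambda>_. c) = c"
  using EE_prod[of "{}"] expect_cmult[of "tuples m Om" "\<lambda>ws. \<Prod>g<m. nu (ws ! g)" c "\<lambda>_. 1"]
  by simp

lemma EE_if_zero: "EE (\<lambda>ws. if b then 0 else G ws) = (if b then 0 else EE G)"
  by (simp add: EE_const)

lemma EE_pair:
  "g < m \<Longrightarrow> h < m \<Longrightarrow> g \<noteq> h \<Longrightarrow> EE (\<lambda>ws. a (ws ! g) * b (ws ! h)) = E1 a * E1 b"
  using EE_prod[of "{g, h}" "\<lambda>j. if j = g then a else b"] by simp

lemma EE_triple:
  "g < m \<Longrightarrow> h < m \<Longrightarrow> l < m \<Longrightarrow> g \<noteq> h \<Longrightarrow> g \<noteq> l \<Longrightarrow> h \<noteq> l \<Longrightarrow>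
    EE (\<lambda>ws. a (ws ! g) * b (ws ! h) * c (ws ! l)) = E1 a * E1 b * E1 c"
  using EE_prod[of "{g, h, l}" "\<lambda>j. if j = g then a else if j = h then b else c"]
  by (simp add: mult.assoc)

lemma EE_quadruple:
  "g < m \<Longrightarrow> h < m \<Longrightarrow> l < m \<Longrightarrow> r < m \<Longrightarrow> g \<noteq> h \<Longrightarrow> g \<noteq> l \<Longrightarrow> h \<noteq> l \<Longrightarrow>
    g \<noteq> r \<Longrightarrow> h \<noteq> r \<Longrightarrow> l \<noteq> r \<Longrightarrow>
    EE (\<lambda>ws. a (ws ! g) * b (ws ! h) * c (ws ! l) * d (ws ! r)) = E1 a * E1 b * E1 c * E1 d"
  using EE_prod[of "{g, h, l, r}"
      "\<lambda>j. if j = g then a else if j = h then b else if j = l then c else d"]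
  by (simp add: mult.assoc)

lemma sample_weight_nonneg: "ws \<in> tuples m Om \<Longrightarrow> 0 \<le> (\<Prod>g<m. nu (ws ! g))"
  by (rule prod_nonneg) (auto simp: tuples_def intro!: nu_nonneg)

lemma EE_chebyshev:
  "0 < s \<Longrightarrow> (\<And>ws. P ws \<Longrightarrow> s \<le> \<bar>T ws - t\<bar>) \<Longrightarrow>
    EE (\<lambda>ws. of_bool (P ws)) \<le> EE (\<lambda>ws. (T ws - t)\<^sup>2) / s\<^sup>2"
  by (rule chebyshev) (auto intro: sample_weight_nonneg)

end

lemma sum_of_bool_eq_left: "a < (m::nat) \<Longrightarrow> (\<Sum>x<m. of_bool (a = x) :: real) = 1"
  by (simp add: of_bool_def sum.delta')

lemma sum_of_bool_eq_right: "a < (m::nat) \<Longrightarrow> (\<Sum>x<m. of_bool (x = a) :: real) = 1"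
  by (simp add: of_bool_def sum.delta)

lemma sum_neq_const: "g < m \<Longrightarrow> (\<Sum>h<m. if g = h then 0 else c :: real) = (real m - 1) * c"
  by (simp add: sum.If_cases Diff_eq[symmetric] card_Diff_singleton)

lemma sum4_cong_const:
  assumes "\<And>g h. g < m \<Longrightarrow> h < m \<Longrightarrow> (\<Sum>g'<m. \<Sum>h'<m. f g h g' h') = (c :: real)"
  shows "(\<Sum>g<m. \<Sum>h<m. \<Sum>g'<m. \<Sum>h'<m. f g h g' h') = real m ^ 2 * c"
  using assms by (simp add: power2_eq_square)

lemma sum4_distinct_pairs:
  "(\<Sum>g<m. \<Sum>h<m. \<Sum>g'<m. \<Sum>h'<m. if g = h \<or> g' = h' then 0 else c :: real)
     = (real m * (real m - 1))\<^sup>2 * c"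
proof -
  have inner: "(\<Sum>g'<m. \<Sum>h'<m. if g = h \<or> g' = h' then 0 else c)
      = (if g = h then 0 else real m * (real m - 1) * c)" for g h
    by (cases "g = h") (simp_all add: sum_neq_const)
  have "(\<Sum>g<m. \<Sum>h<m. \<Sum>g'<m. \<Sum>h'<m. if g = h \<or> g' = h' then 0 else c)
      = (\<Sum>g<m. \<Sum>h<m. if g = h then 0 else real m * (real m - 1) * c)"
    by (simp only: inner)
  also have "\<dots> = (\<Sum>g<m. (real m - 1) * (real m * (real m - 1) * c))"
    by (intro sum.cong refl) (simp add: sum_neq_const)
  finally show ?thesis
    by (simp add: power2_eq_square mult_ac)
qed

lemma sum4_one_shared_index:
  "(\<Sum>g<m. \<Sum>h<m. \<Sum>g'<m. \<Sum>h'<m.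
      of_bool (g = g') + of_bool (g = h') + of_bool (h = g') + of_bool (h = h') :: real)
     = 4 * real m ^ 3"
  by (subst sum4_cong_const[where c = "4 * real m"])
    (simp_all add: sum.distrib sum_of_bool_eq_left sum_of_bool_eq_right sum.swap[of _ "{..<m}"]
      power_def)

lemma sum4_same_pair:
  "(\<Sum>g<m. \<Sum>h<m. \<Sum>g'<m. \<Sum>h'<m. of_bool (g = g' \<and> h = h') + of_bool (g = h' \<and> h = g') :: real)
     = 2 * real m ^ 2"
  by (subst sum4_cong_const[where c = 2])
    (simp_all add: sum.distrib of_bool_conj sum_of_bool_eq_left sum_of_bool_eq_right
      flip: sum_distrib_left sum_distrib_right)

locale u_statistic = iid_sample Om nu m for Om :: "'w set" and nu m +
  fixes V :: "'w \<Rightarrow> 'c \<Rightarrow> real" and I :: "'c set"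
  assumes finite_I: "finite I"
begin

definition K :: "'w \<Rightarrow> 'w \<Rightarrow> real" where
  "K w w' = (\<Sum>c\<in>I. V w c * V w' c)"

definition T :: "'w list \<Rightarrow> real" where
  "T ws = (\<Sum>g<m. \<Sum>h<m. if g = h then 0 else K (ws ! g) (ws ! h))"

definition v :: "'c \<Rightarrow> real" where
  "v c = E1 (\<lambda>w. V w c)"

definition M :: "'c \<Rightarrow> 'c \<Rightarrow> real" where
  "M c c' = E1 (\<lambda>w. V w c * V w c')"

definition D :: real where
  "D = (\<Sum>c\<in>I. (v c)\<^sup>2)"

definition Bq :: real where
  "Bq = (\<Sum>c\<in>I. \<Sum>c'\<in>I. M c c' * v c * v c')"

definition Aq :: real where
  "Aq = (\<Sum>c\<in>I. \<Sum>c'\<in>I. (M c c')\<^sup>2)"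

lemma EE_K: "g < m \<Longrightarrow> h < m \<Longrightarrow> g \<noteq> h \<Longrightarrow> EE (\<lambda>ws. K (ws ! g) (ws ! h)) = D"
  unfolding K_def D_def v_def
  using EE_pair[of g h "\<lambda>w. V w _" "\<lambda>w. V w _"]
  by (simp add: expect_sum[OF finite_I] power2_eq_square)

lemma EE_T: "EE T = real m * (real m - 1) * D"
proof -
  have "EE T = (\<Sum>g<m. \<Sum>h<m. EE (\<lambda>ws. if g = h then 0 else K (ws ! g) (ws ! h)))"
    unfolding T_def by (simp add: expect_sum)
  also have "\<dots> = (\<Sum>g<m. \<Sum>h<m. if g = h then 0 else D)"
    by (intro sum.cong refl) (simp add: EE_if_zero EE_K)
  finally show ?thesis
    by (simp add: sum_neq_const)
qed

lemma E1_quadratic_form: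
  "E1 (\<lambda>w. (\<Sum>c\<in>I. V w c * u c)\<^sup>2) = (\<Sum>c\<in>I. \<Sum>c'\<in>I. M c c' * u c * u c')"
proof -
  have "(\<Sum>c\<in>I. V w c * u c)\<^sup>2 = (\<Sum>c\<in>I. \<Sum>c'\<in>I. u c * u c' * (V w c * V w c'))" for w
    unfolding power2_eq_square sum_product by (intro sum.cong refl) (simp add: mult_ac)
  then show ?thesis
    by (simp add: expect_sum[OF finite_I] expect_cmult M_def mult_ac)
qed

lemma quadratic_form_nonneg: "0 \<le> (\<Sum>c\<in>I. \<Sum>c'\<in>I. M c c' * u c * u c')"
  unfolding E1_quadratic_form[symmetric] by (rule expect_nonneg) (simp_all add: nu_nonneg)

lemma Bq_nonneg: "0 \<le> Bq"
  unfolding Bq_def by (rule quadratic_form_nonneg)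

lemma Aq_nonneg: "0 \<le> Aq"
  unfolding Aq_def by (intro sum_nonneg) simp

lemma D_nonneg: "0 \<le> D"
  unfolding D_def by (intro sum_nonneg) simp

lemma EE_K_K:
  "EE (\<lambda>ws. K (ws ! g) (ws ! h) * K (ws ! g') (ws ! h')) =
    (\<Sum>c\<in>I. \<Sum>c'\<in>I. EE (\<lambda>ws. V (ws ! g) c * V (ws ! h) c * V (ws ! g') c' * V (ws ! h') c'))"
  unfolding K_def sum_product by (simp add: expect_sum[OF finite_I] mult.assoc)

lemma EE_K_K_disjoint:
  assumes "g < m" "h < m" "g' < m" "h' < m" "g \<noteq> h" "g \<noteq> g'" "h \<noteq> g'" "g \<noteq> h'" "h \<noteq> h'" "g' \<noteq> h'"
  shows "EE (\<lambda>ws. K (ws ! g) (ws ! h) * K (ws ! g') (ws ! h')) = D\<^sup>2"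
  unfolding EE_K_K D_def v_def
  using EE_quadruple[OF assms, of "\<lambda>w. V w _" "\<lambda>w. V w _" "\<lambda>w. V w _" "\<lambda>w. V w _"]
  by (simp add: power2_eq_square sum_product mult.assoc)

lemma EE_K_K_same_pair:
  assumes "g < m" "h < m" "g \<noteq> h"
  shows "EE (\<lambda>ws. K (ws ! g) (ws ! h) * K (ws ! g) (ws ! h)) = Aq"
  unfolding EE_K_K Aq_def M_def
  using EE_pair[OF assms, of "\<lambda>w. V w _ * V w _" "\<lambda>w. V w _ * V w _"]
  by (simp add: power2_eq_square mult_ac)

lemma K_commute: "K w w' = K w' w"
  by (simp add: K_def mult.commute)

lemma EE_K_K_one_shared:
  assumes "i < m" "j < m" "l < m" "i \<noteq> j" "i \<noteq> l" "j \<noteq> l"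
  shows "EE (\<lambda>ws. K (ws ! i) (ws ! j) * K (ws ! i) (ws ! l)) = Bq"
proof -
  have "EE (\<lambda>ws. V (ws ! i) c * V (ws ! j) c * V (ws ! i) c' * V (ws ! l) c') = M c c' * v c * v c'"
    for c c'
    using EE_triple[OF assms, of "\<lambda>w. V w c * V w c'" "\<lambda>w. V w c" "\<lambda>w. V w c'"]
    by (simp add: M_def v_def mult_ac)
  then show ?thesis
    unfolding EE_K_K Bq_def by simp
qed

lemma EE_K_K_le:
  assumes "g < m" "h < m" "g' < m" "h' < m" "g \<noteq> h" "g' \<noteq> h'"
  shows "EE (\<lambda>ws. K (ws ! g) (ws ! h) * K (ws ! g') (ws ! h')) \<le>
     D\<^sup>2 + Bq * (of_bool (g = g') + of_bool (g = h') + of_bool (h = g') + of_bool (h = h'))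
        + Aq * (of_bool (g = g' \<and> h = h') + of_bool (g = h' \<and> h = g'))"
proof -
  note nonneg = D_nonneg Bq_nonneg Aq_nonneg
  consider "g' = g" "h' = h" | "g' = h" "h' = g"
    | "g' = g" "h' \<noteq> h" | "g' = h" "h' \<noteq> g" | "h' = g" "g' \<noteq> h" | "h' = h" "g' \<noteq> g"
    | "g' \<noteq> g" "g' \<noteq> h" "h' \<noteq> g" "h' \<noteq> h"
    by blast
  then show ?thesis
  proof cases
    case 1
    then show ?thesis using EE_K_K_same_pair[of g h] assms nonneg by simp
  next
    case 2
    then show ?thesis using EE_K_K_same_pair[of g h] assms nonneg by (simp add: K_commute[of "_ ! h"])
  next
    case 3
    then show ?thesis using EE_K_K_one_shared[of g h h'] assms nonneg by simp
  next
    case 4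
    then show ?thesis using EE_K_K_one_shared[of h g h'] assms nonneg by (simp add: K_commute[of "_ ! g"])
  next
    case 5
    then show ?thesis using EE_K_K_one_shared[of g h g'] assms nonneg by (simp add: K_commute[of "_ ! g'"])
  next
    case 6
    then show ?thesis using EE_K_K_one_shared[of h g g'] assms nonneg by (simp add: K_commute)
  next
    case 7
    then show ?thesis using EE_K_K_disjoint[of g h g' h'] assms nonneg by simp
  qed
qed

lemma T_square:
  "(T ws)\<^sup>2 = (\<Sum>g<m. \<Sum>h<m. \<Sum>g'<m. \<Sum>h'<m.
     if g = h \<or> g' = h' then 0 else K (ws ! g) (ws ! h) * K (ws ! g') (ws ! h'))"
  unfolding T_def power2_eq_square sum_distrib_right sum_distrib_left
  by (intro sum.cong refl) simp

lemma EE_T_square_le: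
  "EE (\<lambda>ws. (T ws)\<^sup>2) \<le> (real m * (real m - 1))\<^sup>2 * D\<^sup>2 + 4 * real m ^ 3 * Bq + 2 * real m ^ 2 * Aq"
proof -
  define one :: "nat \<Rightarrow> nat \<Rightarrow> nat \<Rightarrow> nat \<Rightarrow> real" where
    "one g h g' h' = of_bool (g = g') + of_bool (g = h') + of_bool (h = g') + of_bool (h = h')" for g h g' h'
  define two :: "nat \<Rightarrow> nat \<Rightarrow> nat \<Rightarrow> nat \<Rightarrow> real" where
    "two g h g' h' = of_bool (g = g' \<and> h = h') + of_bool (g = h' \<and> h = g')" for g h g' h'
  have "EE (\<lambda>ws. (T ws)\<^sup>2) = (\<Sum>g<m. \<Sum>h<m. \<Sum>g'<m. \<Sum>h'<m.
     if g = h \<or> g' = h' then 0 else EE (\<lambda>ws. K (ws ! g) (ws ! h) * K (ws ! g') (ws ! h')))"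
    unfolding T_square by (simp only: expect_sum finite_lessThan EE_if_zero)
  also have "\<dots> \<le> (\<Sum>g<m. \<Sum>h<m. \<Sum>g'<m. \<Sum>h'<m.
     (if g = h \<or> g' = h' then 0 else D\<^sup>2) + Bq * one g h g' h' + Aq * two g h g' h')"
    using EE_K_K_le Bq_nonneg Aq_nonneg
    by (intro sum_mono) (auto simp: one_def two_def add.assoc)
  also have "\<dots> = (\<Sum>g<m. \<Sum>h<m. \<Sum>g'<m. \<Sum>h'<m. if g = h \<or> g' = h' then 0 else D\<^sup>2)
      + Bq * (\<Sum>g<m. \<Sum>h<m. \<Sum>g'<m. \<Sum>h'<m. one g h g' h')
      + Aq * (\<Sum>g<m. \<Sum>h<m. \<Sum>g'<m. \<Sum>h'<m. two g h g' h')"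
    by (simp only: sum.distrib sum_distrib_left)
  also have "\<dots> = (real m * (real m - 1))\<^sup>2 * D\<^sup>2 + Bq * (4 * real m ^ 3) + Aq * (2 * real m ^ 2)"
    unfolding one_def two_def sum4_distinct_pairs sum4_one_shared_index sum4_same_pair ..
  finally show ?thesis
    by (simp add: mult_ac)
qed

lemma Bq_le:
  assumes "\<And>u. (\<Sum>c\<in>I. \<Sum>c'\<in>I. M c c' * u c * u c') \<le> \<beta> * (\<Sum>c\<in>I. (u c)\<^sup>2)"
  shows "Bq \<le> \<beta> * D"
  unfolding Bq_def D_def by (rule assms)

lemma Aq_le:
  assumes M_le: "\<And>u. (\<Sum>c\<in>I. \<Sum>c'\<in>I. M c c' * u c * u c') \<le> \<beta> * (\<Sum>c\<in>I. (u c)\<^sup>2)"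
    and "0 \<le> \<beta>"
  shows "Aq \<le> \<beta>\<^sup>2 * real (card I)"
proof -
  have M_diag: "M c c \<le> \<beta>" if "c \<in> I" for c
    using M_le[of "\<lambda>a. of_bool (a = c)"] that finite_I
    by (simp add: of_bool_def if_distrib[of "\<lambda>x. _ * x"] if_distrib[of "\<lambda>x. x\<^sup>2"] sum.delta'
        cong: if_cong)
  have "Aq = E1 (\<lambda>w. \<Sum>c\<in>I. \<Sum>c'\<in>I. M c c' * V w c * V w c')"
    unfolding Aq_def M_def by (simp add: expect_sum[OF finite_I] expect_cmult power2_eq_square mult.assoc)
  also have "\<dots> \<le> E1 (\<lambda>w. \<beta> * (\<Sum>c\<in>I. (V w c)\<^sup>2))"
    by (intro expect_mono M_le nu_nonneg)
  also have "\<dots> = \<beta> * (\<Sum>c\<in>I. M c c)"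
    by (simp add: expect_cmult expect_sum[OF finite_I] M_def power2_eq_square)
  also have "\<dots> \<le> \<beta> * (\<Sum>c\<in>I. \<beta>)"
    by (intro mult_left_mono sum_mono M_diag assms(2))
  finally show ?thesis
    by (simp add: power2_eq_square mult_ac)
qed

lemma variance_T_le:
  assumes M_le: "\<And>u. (\<Sum>c\<in>I. \<Sum>c'\<in>I. M c c' * u c * u c') \<le> \<beta> * (\<Sum>c\<in>I. (u c)\<^sup>2)"
    and "0 \<le> \<beta>"
  shows "EE (\<lambda>ws. (T ws - real m * (real m - 1) * D)\<^sup>2)
    \<le> 4 * real m ^ 3 * (\<beta> * D) + 2 * real m ^ 2 * (\<beta>\<^sup>2 * real (card I))"
proof -
  let ?t = "real m * (real m - 1) * D"
  have "(\<lambda>ws. (T ws - ?t)\<^sup>2) = (\<lambda>ws. ((T ws)\<^sup>2 + ?t\<^sup>2) - 2 * ?t * T ws)"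
    by (simp add: power2_eq_square algebra_simps)
  then have "EE (\<lambda>ws. (T ws - ?t)\<^sup>2) = EE (\<lambda>ws. (T ws)\<^sup>2) - (real m * (real m - 1))\<^sup>2 * D\<^sup>2"
    by (simp add: expect_diff expect_add expect_cmult EE_const EE_T power2_eq_square)
  moreover have "4 * real m ^ 3 * Bq \<le> 4 * real m ^ 3 * (\<beta> * D)"
    using Bq_le[OF M_le] by (intro mult_left_mono) auto
  moreover have "2 * real m ^ 2 * Aq \<le> 2 * real m ^ 2 * (\<beta>\<^sup>2 * real (card I))"
    using Aq_le[OF M_le assms(2)] by (intro mult_left_mono) auto
  ultimately show ?thesis
    using EE_T_square_le by linarith
qed

definition accepts :: "real \<Rightarrow> 'w list \<Rightarrow> real" where
  "accepts \<theta> ws = of_bool (T ws < real m * (real m - 1) * \<theta>)"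

lemma null_rejection_le:
  assumes "D = 0"
    and M_le: "\<And>u. (\<Sum>c\<in>I. \<Sum>c'\<in>I. M c c' * u c * u c') \<le> \<beta> * (\<Sum>c\<in>I. (u c)\<^sup>2)"
    and "0 \<le> \<beta>" and "2 \<le> m" and "0 < \<theta>"
  shows "1 - EE (accepts \<theta>) \<le> 2 * \<beta>\<^sup>2 * real (card I) / ((real m - 1)\<^sup>2 * \<theta>\<^sup>2)"
proof -
  let ?s = "real m * (real m - 1) * \<theta>"
  have m: "0 < real m - 1" "0 < real m" using assms(4) by auto
  then have s: "0 < ?s" using assms(5) by simp
  have "1 - EE (accepts \<theta>) = EE (\<lambda>ws. of_bool (\<not> T ws < ?s))"
    using expect_diff[of _ _ "\<lambda>_. 1" "accepts \<theta>"] by (simp add: EE_const accepts_def of_bool_not_iff)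
  also have "\<dots> \<le> EE (\<lambda>ws. (T ws - real m * (real m - 1) * D)\<^sup>2) / ?s\<^sup>2"
    by (rule EE_chebyshev[OF s]) (auto simp: \<open>D = 0\<close>)
  also have "\<dots> \<le> 2 * real m ^ 2 * (\<beta>\<^sup>2 * real (card I)) / ?s\<^sup>2"
    using variance_T_le[OF M_le assms(3)] \<open>D = 0\<close> by (intro divide_right_mono) auto
  also have "\<dots> = 2 * \<beta>\<^sup>2 * real (card I) / ((real m - 1)\<^sup>2 * \<theta>\<^sup>2)"
  proof -
    have "?s\<^sup>2 = real m ^ 2 * ((real m - 1)\<^sup>2 * \<theta>\<^sup>2)"
      by (simp add: power_mult_distrib)
    then show ?thesis
      using m by (simp add: mult.assoc)
  qed
  finally show ?thesis .
qed

lemma alternative_acceptance_le: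
  assumes "2 * \<theta> \<le> D"
    and M_le: "\<And>u. (\<Sum>c\<in>I. \<Sum>c'\<in>I. M c c' * u c * u c') \<le> \<beta> * (\<Sum>c\<in>I. (u c)\<^sup>2)"
    and "0 \<le> \<beta>" and "2 \<le> m" and "0 < \<theta>"
  shows "EE (accepts \<theta>) \<le> 16 * \<beta> * real m / ((real m - 1)\<^sup>2 * D)
    + 8 * \<beta>\<^sup>2 * real (card I) / ((real m - 1)\<^sup>2 * D\<^sup>2)"
proof -
  let ?t = "real m * (real m - 1) * D"
  let ?s = "real m * (real m - 1) * (D - \<theta>)"
  let ?s' = "real m * (real m - 1) * D / 2"
  have m: "0 < real m - 1" "0 < real m" using assms(4) by auto
  have D: "0 < D" using assms(1,5) by simp
  have s': "0 < ?s'" using m D by simp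
  have "D / 2 \<le> D - \<theta>"
    using assms(1) by simp
  then have s: "?s' \<le> ?s"
    using mult_left_mono[of "D / 2" "D - \<theta>" "real m * (real m - 1)"] m by simp
  then have s0: "0 < ?s"
    using s' by linarith
  have "EE (accepts \<theta>) \<le> EE (\<lambda>ws. (T ws - ?t)\<^sup>2) / ?s\<^sup>2"
    unfolding accepts_def
  proof (rule EE_chebyshev)
    show "0 < ?s" by (rule s0)
    show "?s \<le> \<bar>T ws - ?t\<bar>" if "T ws < real m * (real m - 1) * \<theta>" for ws
      using that by (simp add: algebra_simps)
  qed
  also have "\<dots> \<le> EE (\<lambda>ws. (T ws - ?t)\<^sup>2) / ?s'\<^sup>2"
  proof (rule divide_left_mono)
    show "?s'\<^sup>2 \<le> ?s\<^sup>2" using s s' by (intro power_mono) auto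
    show "0 \<le> EE (\<lambda>ws. (T ws - ?t)\<^sup>2)" by (intro expect_nonneg sample_weight_nonneg) auto
    show "0 < ?s\<^sup>2 * ?s'\<^sup>2" by (intro mult_pos_pos zero_less_power s0 s')
  qed
  also have "\<dots> \<le> (4 * real m ^ 3 * (\<beta> * D) + 2 * real m ^ 2 * (\<beta>\<^sup>2 * real (card I))) / ?s'\<^sup>2"
    using variance_T_le[OF M_le assms(3)] by (intro divide_right_mono) auto
  also have "\<dots> = 16 * \<beta> * real m / ((real m - 1)\<^sup>2 * D) + 8 * \<beta>\<^sup>2 * real (card I) / ((real m - 1)\<^sup>2 * D\<^sup>2)"
  proof -
    have "(4 * x ^ 3 * (\<beta> * D) + 2 * x\<^sup>2 * Y) / (x * a * D / 2)\<^sup>2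
       = 16 * \<beta> * x / (a\<^sup>2 * D) + 8 * Y / (a\<^sup>2 * D\<^sup>2)" if "0 < x" "0 < a" for x a Y :: real
      using that D by (simp add: field_simps power2_eq_square power3_eq_cube)
    from this[OF m(2) m(1), of "\<beta>\<^sup>2 * real (card I)"] show ?thesis
      by (simp add: mult_ac)
  qed
  finally show ?thesis .
qed

end

section \<open>Randomized response on one-hot encodings\<close>

lemma pair_index_eq_iff:
  fixes a b a' b' k :: nat
  assumes "b < k" "b' < k"
  shows "a * k + b = a' * k + b' \<longleftrightarrow> a = a' \<and> b = b'"
proof
  assume eq: "a * k + b = a' * k + b'"
  have "a = (a * k + b) div k" and "b = (a * k + b) mod k"
    using assms(1) by simp_all
  moreover have "a' = (a' * k + b') div k" and "b' = (a' * k + b') mod k"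
    using assms(2) by simp_all
  ultimately show "a = a' \<and> b = b'"
    using eq by metis
qed simp

lemma pair_index_less: "a < k \<Longrightarrow> b < k \<Longrightarrow> a * k + b < k * (k :: nat)"
proof -
  assume "a < k" "b < k"
  then have "a * k + b < (a + 1) * k" by simp
  also have "\<dots> \<le> k * k" using \<open>a < k\<close> by (intro mult_le_mono1) simp
  finally show ?thesis .
qed

lemma square_sum_of_bool_le:
  assumes "finite S" and unique: "\<And>c c'. c \<in> S \<Longrightarrow> c' \<in> S \<Longrightarrow> P c \<Longrightarrow> P c' \<Longrightarrow> c = c'"
  shows "(\<Sum>c\<in>S. u c * of_bool (P c))\<^sup>2 \<le> (\<Sum>c\<in>S. (u c :: real)\<^sup>2)"
proof (cases "\<exists>c0\<in>S. P c0")
  case True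
  then obtain c0 where c0: "c0 \<in> S" "P c0" by blast
  have "(\<Sum>c\<in>S. u c * of_bool (P c)) = (\<Sum>c\<in>S. if c = c0 then u c0 else 0)"
    by (intro sum.cong refl) (use unique c0 in auto)
  then show ?thesis
    using member_le_sum[of c0 S "\<lambda>c. (u c)\<^sup>2"] c0 assms(1) by simp
next
  case False
  then have "(\<Sum>c\<in>S. u c * of_bool (P c)) = 0" by (intro sum.neutral) auto
  then show ?thesis by (simp add: sum_nonneg)
qed

text \<open>Each user reports the \<open>k\<^sup>2 + 2 k\<close> bits of the one-hot encodings of \<open>x\<close>, of its row \<open>fst x\<close>
  and of its column \<open>snd x\<close>, each kept independently with probability \<open>r / (1 + r)\<close> and flipped
  otherwise.\<close>
locale randomized_response =
  fixes k :: nat and r :: real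
  assumes one_less_r: "1 < r"
begin

definition alpha :: real where
  "alpha = r / (1 + r)"

definition nbits :: nat where
  "nbits = k * k + 2 * k"

definition encoding :: "nat \<times> nat \<Rightarrow> nat \<Rightarrow> bool" where
  "encoding x i = (if i < k * k then i = fst x * k + snd x
     else if i < k * k + k then i - k * k = fst x else i - (k * k + k) = snd x)"

definition bit_prob :: "nat \<times> nat \<Rightarrow> nat \<Rightarrow> bool \<Rightarrow> real" where
  "bit_prob x i b = (if b = encoding x i then alpha else 1 - alpha)"

definition report_prob :: "nat \<times> nat \<Rightarrow> bool list \<Rightarrow> real" where
  "report_prob x bs = (\<Prod>i<nbits. bit_prob x i (bs ! i))"

definition reports :: "bool list set" where
  "reports = tuples nbits UNIV"

definition outputs :: "nat set" where
  "outputs = to_nat ` reports"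

definition channel :: "nat \<times> nat \<Rightarrow> nat \<Rightarrow> real" where
  "channel x z = report_prob x (from_nat z)"

abbreviation Erep :: "nat \<times> nat \<Rightarrow> (bool list \<Rightarrow> real) \<Rightarrow> real" where
  "Erep x \<equiv> expect reports (report_prob x)"

definition debias :: "bool \<Rightarrow> real" where
  "debias b = (of_bool b - (1 - alpha)) / (2 * alpha - 1)"

definition sigma2 :: real where
  "sigma2 = r / (r - 1)\<^sup>2"

definition beta :: real where
  "beta = 2 * (1 + sigma2) + 2 * (1 + sigma2)\<^sup>2"

definition joint_est :: "nat \<Rightarrow> nat \<times> nat \<Rightarrow> real" where
  "joint_est z c = debias (from_nat z ! (fst c * k + snd c))"

definition row_est :: "nat \<Rightarrow> nat \<Rightarrow> real" where
  "row_est z a = debias (from_nat z ! (k * k + a))"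

definition col_est :: "nat \<Rightarrow> nat \<Rightarrow> real" where
  "col_est z b = debias (from_nat z ! (k * k + k + b))"

text \<open>From the outputs of three independent users, an unbiased estimate of \<open>p c - p\<^sub>1 a * p\<^sub>2 b\<close> at
  \<open>c = (a, b)\<close>, where \<open>p\<^sub>1\<close> and \<open>p\<^sub>2\<close> are the marginals of \<open>p\<close>.\<close>
definition dep_est :: "nat \<times> nat \<times> nat \<Rightarrow> nat \<times> nat \<Rightarrow> real" where
  "dep_est w c = (case w of (z0, z1, z2) \<Rightarrow> joint_est z0 c - row_est z1 (fst c) * col_est z2 (snd c))"

definition test_stat :: "nat \<Rightarrow> (nat \<times> nat \<times> nat) list \<Rightarrow> real" where
  "test_stat m ws = (\<Sum>g<m. \<Sum>h<m. if g = h then 0 else \<Sum>c\<in>sq k. dep_est (ws ! g) c * dep_est (ws ! h) c)"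

definition tester :: "nat \<Rightarrow> real \<Rightarrow> nat list \<Rightarrow> real" where
  "tester m \<theta> zs = of_bool (test_stat m (triples m zs) < real m * (real m - 1) * \<theta>)"

lemma alpha_bounds: "0 < alpha" "alpha < 1" "0 < 2 * alpha - 1"
  using one_less_r by (auto simp: alpha_def field_simps)

lemma bit_prob_nonneg: "0 \<le> bit_prob x i b"
  using alpha_bounds by (simp add: bit_prob_def)

lemma sum_bit_prob: "sum (bit_prob x i) UNIV = 1"
  by (simp add: UNIV_bool bit_prob_def)

lemma report_prob_nonneg: "0 \<le> report_prob x bs"
  unfolding report_prob_def by (intro prod_nonneg) (simp add: bit_prob_nonneg)

lemma finite_outputs [simp]: "finite outputs"
  by (simp add: outputs_def reports_def)

lemma sum_outputs: "(\<Sum>z\<in>outputs. F z) = (\<Sum>bs\<in>reports. F (to_nat bs))"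
  unfolding outputs_def by (rule sum.reindex[unfolded comp_def]) (simp add: inj_on_def)

lemma Erep_prod:
  "J \<subseteq> {..<nbits} \<Longrightarrow> Erep x (\<lambda>bs. \<Prod>i\<in>J. g i (bs ! i)) = (\<Prod>i\<in>J. expect UNIV (bit_prob x i) (g i))"
  unfolding report_prob_def reports_def by (rule expect_tuples_prod) (auto simp: sum_bit_prob)

lemma sum_channel: "(\<Sum>z\<in>outputs. channel x z) = 1"
  using Erep_prod[of "{}" x] by (simp add: sum_outputs channel_def expect_def)

lemma channel_nonneg: "0 \<le> channel x z"
  by (simp add: channel_def report_prob_nonneg)

lemma expect_debias: "expect UNIV (bit_prob x i) debias = of_bool (encoding x i)"
  using alpha_bounds(3)
  by (cases "encoding x i")
    (simp_all add: expect_def UNIV_bool bit_prob_def debias_def divide_simps, simp_all add: algebra_simps)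

lemma sigma2_eq: "sigma2 = alpha * (1 - alpha) / (2 * alpha - 1)\<^sup>2"
proof -
  have "alpha * (1 - alpha) = r / (1 + r)\<^sup>2" and "2 * alpha - 1 = (r - 1) / (1 + r)"
    using one_less_r unfolding alpha_def by (simp_all add: field_simps power2_eq_square)
  then show ?thesis
    using one_less_r by (simp add: sigma2_def power_divide)
qed

lemma expect_debias_square:
  "expect UNIV (bit_prob x i) (\<lambda>b. debias b * debias b) = of_bool (encoding x i) + sigma2"
proof -
  have "alpha ^ 3 + (1 - alpha) ^ 3 = (2 * alpha - 1)\<^sup>2 + alpha * (1 - alpha)"
    "(1 - alpha) * alpha\<^sup>2 + alpha * (1 - alpha)\<^sup>2 = alpha * (1 - alpha)"
    by (simp_all add: power2_eq_square power3_eq_cube algebra_simps)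
  then show ?thesis
    using alpha_bounds(3)
    by (cases "encoding x i")
      (simp_all add: expect_def UNIV_bool bit_prob_def debias_def sigma2_eq divide_simps
        power2_eq_square power3_eq_cube, simp_all add: algebra_simps)
qed

lemma sigma2_nonneg: "0 \<le> sigma2"
  using one_less_r by (simp add: sigma2_def)

lemma Erep_debias: "i < nbits \<Longrightarrow> Erep x (\<lambda>bs. debias (bs ! i)) = of_bool (encoding x i)"
  using Erep_prod[of "{i}" x "\<lambda>_. debias"] by (simp add: expect_debias)

lemma Erep_debias_pair:
  assumes "i < nbits" "j < nbits"
  shows "Erep x (\<lambda>bs. debias (bs ! i) * debias (bs ! j))
    = of_bool (encoding x i) * of_bool (encoding x j) + of_bool (i = j) * sigma2"
proof (cases "i = j")
  case True
  then show ?thesis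
    using assms Erep_prod[of "{i}" x "\<lambda>_ b. debias b * debias b"] by (simp add: expect_debias_square)
next
  case False
  then show ?thesis
    using assms Erep_prod[of "{i, j}" x "\<lambda>_. debias"] by (simp add: expect_debias)
qed

lemma Erep_debias_square_sum:
  assumes "finite S" and inj: "inj_on \<iota> S" and bits: "\<And>c. c \<in> S \<Longrightarrow> \<iota> c < nbits"
  shows "Erep x (\<lambda>bs. (\<Sum>c\<in>S. u c * debias (bs ! \<iota> c))\<^sup>2)
    = (\<Sum>c\<in>S. u c * of_bool (encoding x (\<iota> c)))\<^sup>2 + sigma2 * (\<Sum>c\<in>S. (u c)\<^sup>2)"
proof -
  let ?e = "\<lambda>c. of_bool (encoding x (\<iota> c)) :: real"
  have square: "(\<Sum>c\<in>S. u c * debias (bs ! \<iota> c))\<^sup>2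
      = (\<Sum>c\<in>S. \<Sum>c'\<in>S. (u c * u c') * (debias (bs ! \<iota> c) * debias (bs ! \<iota> c')))" for bs
    unfolding power2_eq_square sum_product by (intro sum.cong refl) (simp add: mult_ac)
  have pair: "Erep x (\<lambda>bs. debias (bs ! \<iota> c) * debias (bs ! \<iota> c')) = ?e c * ?e c' + of_bool (c = c') * sigma2"
    if "c \<in> S" "c' \<in> S" for c c'
    using Erep_debias_pair[OF bits[OF that(1)] bits[OF that(2)], of x] inj that
    by (simp add: inj_on_eq_iff)
  have "Erep x (\<lambda>bs. (\<Sum>c\<in>S. u c * debias (bs ! \<iota> c))\<^sup>2)
      = (\<Sum>c\<in>S. \<Sum>c'\<in>S. (u c * ?e c) * (u c' * ?e c'))
        + (\<Sum>c\<in>S. \<Sum>c'\<in>S. of_bool (c = c') * (sigma2 * (u c * u c')))"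
    unfolding square
    by (simp add: expect_sum[OF assms(1)] expect_cmult pair sum.distrib[symmetric] distrib_left mult_ac
        cong: sum.cong)
  moreover have "(\<Sum>c\<in>S. \<Sum>c'\<in>S. (u c * ?e c) * (u c' * ?e c')) = (\<Sum>c\<in>S. u c * ?e c)\<^sup>2"
    by (simp only: power2_eq_square sum_product)
  moreover have "(\<Sum>c\<in>S. \<Sum>c'\<in>S. of_bool (c = c') * (sigma2 * (u c * u c'))) = sigma2 * (\<Sum>c\<in>S. (u c)\<^sup>2)"
    using assms(1)
    by (simp add: of_bool_def if_distrib[of "\<lambda>y. y * _"] sum.delta power2_eq_square sum_distrib_left
        cong: if_cong)
  ultimately show ?thesis
    by simp
qed

lemma Erep_debias_quadratic_le:
  assumes "finite S" and "inj_on \<iota> S" and "\<And>c. c \<in> S \<Longrightarrow> \<iota> c < nbits"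
    and "\<And>c c'. c \<in> S \<Longrightarrow> c' \<in> S \<Longrightarrow> encoding x (\<iota> c) \<Longrightarrow> encoding x (\<iota> c') \<Longrightarrow> c = c'"
  shows "Erep x (\<lambda>bs. (\<Sum>c\<in>S. u c * debias (bs ! \<iota> c))\<^sup>2) \<le> (1 + sigma2) * (\<Sum>c\<in>S. (u c)\<^sup>2)"
proof -
  have "(\<Sum>c\<in>S. u c * of_bool (encoding x (\<iota> c)))\<^sup>2 \<le> (\<Sum>c\<in>S. (u c)\<^sup>2)"
    by (rule square_sum_of_bool_le[OF assms(1)]) (use assms(4) in blast)
  moreover have "Erep x (\<lambda>bs. (\<Sum>c\<in>S. u c * debias (bs ! \<iota> c))\<^sup>2)
      = (\<Sum>c\<in>S. u c * of_bool (encoding x (\<iota> c)))\<^sup>2 + sigma2 * (\<Sum>c\<in>S. (u c)\<^sup>2)"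
    by (rule Erep_debias_square_sum[OF assms(1-3)])
  ultimately show ?thesis
    by (simp add: algebra_simps)
qed

lemma encoding_joint: "x \<in> sq k \<Longrightarrow> a < k \<Longrightarrow> b < k \<Longrightarrow> encoding x (a * k + b) \<longleftrightarrow> x = (a, b)"
  unfolding encoding_def using pair_index_less[of a k b] pair_index_eq_iff[of "snd x" k b "fst x" a]
  by (cases x) auto

lemma encoding_row: "a < k \<Longrightarrow> encoding x (k * k + a) \<longleftrightarrow> fst x = a"
  unfolding encoding_def by auto

lemma encoding_col: "b < k \<Longrightarrow> encoding x (k * k + k + b) \<longleftrightarrow> snd x = b"
  unfolding encoding_def by auto

lemma card_encoding_diff_le: "card {i\<in>{..<nbits}. encoding x i \<noteq> encoding x' i} \<le> 6"
proof -
  let ?L = "[fst x * k + snd x, fst x' * k + snd x', k * k + fst x, k * k + fst x',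
      k * k + k + snd x, k * k + k + snd x']"
  have "{i\<in>{..<nbits}. encoding x i \<noteq> encoding x' i} \<subseteq> set ?L"
  proof
    fix i assume "i \<in> {i\<in>{..<nbits}. encoding x i \<noteq> encoding x' i}"
    then have "encoding x i \<noteq> encoding x' i" by simp
    then show "i \<in> set ?L" unfolding encoding_def by (auto split: if_splits)
  qed
  then have "card {i\<in>{..<nbits}. encoding x i \<noteq> encoding x' i} \<le> card (set ?L)"
    by (intro card_mono) simp_all
  also have "\<dots> \<le> 6"
    using card_length[of ?L] by simp
  finally show ?thesis .
qed

lemma report_prob_le: "report_prob x bs \<le> r ^ 6 * report_prob x' bs"
proof -
  define Ds where "Ds = {i\<in>{..<nbits}. encoding x i \<noteq> encoding x' i}"
  have bit_le: "bit_prob x i b \<le> (if i \<in> Ds then r else 1) * bit_prob x' i b" if "i < nbits" for i b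
  proof (cases "encoding x i = encoding x' i")
    case True
    then show ?thesis using that by (simp add: Ds_def bit_prob_def)
  next
    case False
    have "1 \<le> r * r"
      using one_less_r by (metis less_1_mult less_imp_le)
    then have "alpha = r * (1 - alpha)" "1 - alpha \<le> r * alpha"
      using one_less_r by (simp_all add: alpha_def field_simps)
    then show ?thesis using False that by (auto simp: Ds_def bit_prob_def)
  qed
  have "{..<nbits} \<inter> Ds = Ds"
    by (auto simp: Ds_def)
  then have pow: "(\<Prod>i<nbits. if i \<in> Ds then r else 1) = r ^ card Ds"
    by (simp add: prod.If_cases)
  have "report_prob x bs \<le> (\<Prod>i<nbits. (if i \<in> Ds then r else 1) * bit_prob x' i (bs ! i))"
    unfolding report_prob_def by (intro prod_mono) (auto simp: bit_prob_nonneg bit_le)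
  also have "\<dots> = r ^ card Ds * report_prob x' bs"
    using pow by (simp add: prod.distrib report_prob_def)
  also have "\<dots> \<le> r ^ 6 * report_prob x' bs"
    using one_less_r card_encoding_diff_le[of x x'] unfolding Ds_def
    by (intro mult_right_mono power_increasing) (auto simp: report_prob_nonneg)
  finally show ?thesis .
qed

lemma is_channel_channel: "is_channel (sq k) outputs channel"
  unfolding is_channel_def is_dist_def using sum_channel by (auto simp: channel_nonneg)

lemma is_LDP_channel: "r = exp (\<epsilon> / 6) \<Longrightarrow> is_LDP \<epsilon> (sq k) outputs channel"
  using report_prob_le unfolding is_LDP_def channel_def by (simp add: exp_of_nat_mult[symmetric])

lemma one_le_beta: "1 \<le> beta"
  using sigma2_nonneg by (simp add: beta_def add_increasing2)

lemma sigma2_le: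
  assumes "r = exp (\<epsilon> / 6)" and "0 < \<epsilon>" and "\<epsilon> \<le> 1"
  shows "1 + sigma2 \<le> 43 / \<epsilon>\<^sup>2"
proof -
  define d where "d = r - 1"
  have d: "\<epsilon> / 6 \<le> d"
    using exp_ge_add_one_self[of "\<epsilon> / 6"] assms(1) unfolding d_def by linarith
  then have d0: "0 < d"
    using assms(2) by linarith
  have "sigma2 = (d + 1) / d\<^sup>2"
    by (simp add: sigma2_def d_def)
  also have "\<dots> = 1 / d + 1 / d\<^sup>2"
    using d0 by (simp add: field_simps power2_eq_square)
  also have "\<dots> \<le> 6 / \<epsilon>\<^sup>2 + 36 / \<epsilon>\<^sup>2"
  proof (intro add_mono)
    have "\<epsilon>\<^sup>2 \<le> \<epsilon>"
      using assms by (simp add: power2_eq_square mult_le_cancel_left1)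
    then show "1 / d \<le> 6 / \<epsilon>\<^sup>2"
      using d d0 assms by (simp add: field_simps)
    have "(\<epsilon> / 6)\<^sup>2 \<le> d\<^sup>2"
      using d assms by (intro power_mono) auto
    then show "1 / d\<^sup>2 \<le> 36 / \<epsilon>\<^sup>2"
      using assms d0 by (simp add: field_simps)
  qed
  finally have "sigma2 \<le> 42 / \<epsilon>\<^sup>2"
    by simp
  moreover have "1 \<le> 1 / \<epsilon>\<^sup>2"
    using assms by (simp add: power_le_one)
  ultimately show ?thesis
    by simp
qed

lemma beta_le:
  assumes "r = exp (\<epsilon> / 6)" and "0 < \<epsilon>" and "\<epsilon> \<le> 1"
  shows "beta \<le> 7396 / \<epsilon> ^ 4"
proof -
  have s: "1 \<le> 1 + sigma2" using sigma2_nonneg by simp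
  have "1 * (1 + sigma2) \<le> (1 + sigma2) * (1 + sigma2)"
    using s by (intro mult_right_mono) auto
  then have "beta \<le> 4 * (1 + sigma2)\<^sup>2"
    by (simp add: beta_def power2_eq_square)
  also have "\<dots> \<le> 4 * (43 / \<epsilon>\<^sup>2)\<^sup>2"
    using sigma2_le[OF assms] s by (intro mult_left_mono power_mono) auto
  also have "\<dots> = 7396 / \<epsilon> ^ 4"
    by (simp add: power_divide flip: power_mult)
  finally show ?thesis .
qed

end

section \<open>Estimating the deviation from independence\<close>

lemma sum_sq: "(\<Sum>c\<in>sq k. g c) = (\<Sum>a<k. \<Sum>b<k. g (a, b))"
  by (simp add: sum.cartesian_product' atLeast0LessThan)

locale rr_population = randomized_response +
  fixes p :: "nat \<times> nat \<Rightarrow> real"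
  assumes dist_p: "is_dist (sq k) p"
begin

definition output_prob :: "nat \<Rightarrow> real" where
  "output_prob z = (\<Sum>x\<in>sq k. p x * channel x z)"

abbreviation Eout :: "(nat \<Rightarrow> real) \<Rightarrow> real" where
  "Eout \<equiv> expect outputs output_prob"

definition marg1 :: "nat \<Rightarrow> real" where
  "marg1 a = (\<Sum>b<k. p (a, b))"

definition marg2 :: "nat \<Rightarrow> real" where
  "marg2 b = (\<Sum>a<k. p (a, b))"

lemma p_nonneg: "x \<in> sq k \<Longrightarrow> 0 \<le> p x"
  using dist_p by (auto simp: is_dist_def)

lemma sum_p: "sum p (sq k) = 1"
  using dist_p by (simp add: is_dist_def)

lemma output_prob_nonneg: "0 \<le> output_prob z"
  unfolding output_prob_def by (intro sum_nonneg mult_nonneg_nonneg p_nonneg channel_nonneg) auto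

lemma Eout_eq_mixture: "Eout G = expect (sq k) p (\<lambda>x. Erep x (\<lambda>bs. G (to_nat bs)))"
proof -
  have "Eout G = (\<Sum>z\<in>outputs. \<Sum>x\<in>sq k. p x * (channel x z * G z))"
    unfolding expect_def output_prob_def by (simp add: sum_distrib_left sum_distrib_right mult_ac)
  also have "\<dots> = (\<Sum>x\<in>sq k. p x * (\<Sum>z\<in>outputs. channel x z * G z))"
    by (subst sum.swap) (simp add: sum_distrib_left)
  finally show ?thesis
    by (simp add: expect_def sum_outputs channel_def)
qed

lemma sum_output_prob: "sum output_prob outputs = 1"
  using Eout_eq_mixture[of "\<lambda>_. 1"] Erep_prod[of "{}"] sum_p by (simp add: expect_def)

lemma Eout_le:
  "(\<And>x. x \<in> sq k \<Longrightarrow> Erep x (\<lambda>bs. G (to_nat bs)) \<le> B) \<Longrightarrow> Eout G \<le> B"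
  unfolding Eout_eq_mixture by (rule expect_le_const) (simp_all add: p_nonneg sum_p)

lemma mean_joint_est: "c \<in> sq k \<Longrightarrow> Eout (\<lambda>z. joint_est z c) = p c"
proof -
  assume c: "c \<in> sq k"
  have "fst c * k + snd c < nbits"
    using c pair_index_less[of "fst c" k "snd c"] by (auto simp: nbits_def)
  then have "Eout (\<lambda>z. joint_est z c) = expect (sq k) p (\<lambda>x. of_bool (x = c))"
    unfolding Eout_eq_mixture using c
    by (intro expect_cong) (auto simp: joint_est_def Erep_debias encoding_joint)
  also have "\<dots> = p c"
    using c by (simp add: expect_def of_bool_def if_distrib[of "\<lambda>y. _ * y"] sum.delta' cong: if_cong)
  finally show ?thesis .
qed

lemma mean_row_est: "a < k \<Longrightarrow> Eout (\<lambda>z. row_est z a) = marg1 a"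
proof -
  assume a: "a < k"
  then have "Eout (\<lambda>z. row_est z a) = expect (sq k) p (\<lambda>x. of_bool (fst x = a))"
    unfolding Eout_eq_mixture
    by (intro expect_cong) (simp add: row_est_def Erep_debias encoding_row nbits_def)
  also have "\<dots> = (\<Sum>a'<k. if a' = a then marg1 a else 0)"
    unfolding expect_def sum_sq by (intro sum.cong refl) (simp add: marg1_def)
  also have "\<dots> = marg1 a"
    using a by simp
  finally show ?thesis .
qed

lemma mean_col_est: "b < k \<Longrightarrow> Eout (\<lambda>z. col_est z b) = marg2 b"
proof -
  assume b: "b < k"
  then have "Eout (\<lambda>z. col_est z b) = expect (sq k) p (\<lambda>x. of_bool (snd x = b))"
    unfolding Eout_eq_mixture
    by (intro expect_cong) (simp add: col_est_def Erep_debias encoding_col nbits_def)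
  also have "\<dots> = (\<Sum>a<k. p (a, b))"
    unfolding expect_def sum_sq using b
    by (intro sum.cong refl) (simp add: of_bool_def if_distrib[of "\<lambda>y. _ * y"] sum.delta' cong: if_cong)
  finally show ?thesis
    by (simp add: marg2_def)
qed

lemma quadratic_joint_est_le:
  "Eout (\<lambda>z. (\<Sum>c\<in>sq k. u c * joint_est z c)\<^sup>2) \<le> (1 + sigma2) * (\<Sum>c\<in>sq k. (u c)\<^sup>2)"
proof (rule Eout_le)
  fix x assume x: "x \<in> sq k"
  show "Erep x (\<lambda>bs. (\<Sum>c\<in>sq k. u c * joint_est (to_nat bs) c)\<^sup>2) \<le> (1 + sigma2) * (\<Sum>c\<in>sq k. (u c)\<^sup>2)"
    unfolding joint_est_def from_nat_to_nat
  proof (rule Erep_debias_quadratic_le)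
    show "inj_on (\<lambda>c. fst c * k + snd c) (sq k)"
      by (auto simp: inj_on_def pair_index_eq_iff)
    show "fst c * k + snd c < nbits" if "c \<in> sq k" for c
      using that pair_index_less[of "fst c" k "snd c"] by (auto simp: nbits_def)
    show "c = c'" if "c \<in> sq k" "c' \<in> sq k"
      "encoding x (fst c * k + snd c)" "encoding x (fst c' * k + snd c')" for c c'
      using that encoding_joint[OF x, of "fst c" "snd c"] encoding_joint[OF x, of "fst c'" "snd c'"] by auto
  qed simp
qed

lemma quadratic_row_est_le:
  "Eout (\<lambda>z. (\<Sum>a<k. u a * row_est z a)\<^sup>2) \<le> (1 + sigma2) * (\<Sum>a<k. (u a)\<^sup>2)"
  unfolding row_est_def
  by (rule Eout_le, unfold from_nat_to_nat, rule Erep_debias_quadratic_le)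
    (auto simp: inj_on_def nbits_def encoding_row)

lemma quadratic_col_est_le:
  "Eout (\<lambda>z. (\<Sum>b<k. u b * col_est z b)\<^sup>2) \<le> (1 + sigma2) * (\<Sum>b<k. (u b)\<^sup>2)"
  unfolding col_est_def
  by (rule Eout_le, unfold from_nat_to_nat, rule Erep_debias_quadratic_le)
    (auto simp: inj_on_def nbits_def encoding_col)

definition triple_prob :: "nat \<times> nat \<times> nat \<Rightarrow> real" where
  "triple_prob = (\<lambda>(z0, z1, z2). output_prob z0 * output_prob z1 * output_prob z2)"

abbreviation E3 :: "(nat \<times> nat \<times> nat \<Rightarrow> real) \<Rightarrow> real" where
  "E3 \<equiv> expect (outputs \<times> outputs \<times> outputs) triple_prob"

lemma triple_prob_nonneg: "0 \<le> triple_prob w"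
  by (auto simp: triple_prob_def output_prob_nonneg split: prod.split)

lemma E3_iterated: "E3 h = Eout (\<lambda>z0. Eout (\<lambda>z1. Eout (\<lambda>z2. h (z0, z1, z2))))"
  unfolding expect_def triple_prob_def by (simp add: sum.cartesian_product' sum_distrib_left mult.assoc)

lemma sum_triple_prob: "sum triple_prob (outputs \<times> outputs \<times> outputs) = 1"
  using E3_iterated[of "\<lambda>_. 1"] by (simp add: expect_const sum_output_prob) (simp add: expect_def)

lemma E3_fst: "E3 (\<lambda>(z0, z1, z2). F z0) = Eout F"
  by (simp add: E3_iterated expect_const sum_output_prob)

lemma E3_snd_thd: "E3 (\<lambda>(z0, z1, z2). G z1 z2) = Eout (\<lambda>z1. Eout (\<lambda>z2. G z1 z2))"
  by (simp add: E3_iterated expect_const sum_output_prob)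

lemma mean_dep_est: "c \<in> sq k \<Longrightarrow> E3 (\<lambda>w. dep_est w c) = p c - marg1 (fst c) * marg2 (snd c)"
proof -
  assume c: "c \<in> sq k"
  then have "fst c < k" "snd c < k"
    by auto
  have "(\<lambda>w. dep_est w c) = (\<lambda>w. (\<lambda>(z0, z1, z2). joint_est z0 c) w
      - (\<lambda>(z0, z1, z2). row_est z1 (fst c) * col_est z2 (snd c)) w)"
    by (auto simp: dep_est_def)
  then show ?thesis
    using c \<open>fst c < k\<close> \<open>snd c < k\<close>
    by (simp add: expect_diff E3_fst E3_snd_thd expect_cmult expect_mult_right mean_joint_est
        mean_row_est mean_col_est)
qed

lemma quadratic_row_col_est_le:
  "Eout (\<lambda>z1. Eout (\<lambda>z2. (\<Sum>c\<in>sq k. u c * row_est z1 (fst c) * col_est z2 (snd c))\<^sup>2))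
    \<le> (1 + sigma2)\<^sup>2 * (\<Sum>c\<in>sq k. (u c)\<^sup>2)"
proof -
  let ?s = "1 + sigma2"
  define w where "w z1 b = (\<Sum>a<k. u (a, b) * row_est z1 a)" for z1 b
  have "(\<Sum>c\<in>sq k. u c * row_est z1 (fst c) * col_est z2 (snd c)) = (\<Sum>b<k. w z1 b * col_est z2 b)"
    for z1 z2
    unfolding w_def sum_sq sum_distrib_right by (subst sum.swap) simp
  then have "Eout (\<lambda>z1. Eout (\<lambda>z2. (\<Sum>c\<in>sq k. u c * row_est z1 (fst c) * col_est z2 (snd c))\<^sup>2))
      \<le> Eout (\<lambda>z1. ?s * (\<Sum>b<k. (w z1 b)\<^sup>2))"
    using quadratic_col_est_le by (intro expect_mono output_prob_nonneg) (simp add: mult.commute)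
  also have "\<dots> = ?s * (\<Sum>b<k. Eout (\<lambda>z1. (\<Sum>a<k. u (a, b) * row_est z1 a)\<^sup>2))"
    by (simp add: expect_cmult expect_sum w_def)
  also have "\<dots> \<le> ?s * (\<Sum>b<k. ?s * (\<Sum>a<k. (u (a, b))\<^sup>2))"
    using sigma2_nonneg by (intro mult_left_mono sum_mono quadratic_row_est_le) auto
  also have "\<dots> = ?s\<^sup>2 * (\<Sum>c\<in>sq k. (u c)\<^sup>2)"
    unfolding sum_sq sum_distrib_left power2_eq_square mult.assoc by (subst (2) sum.swap) (rule refl)
  finally show ?thesis .
qed

lemma quadratic_dep_est_le:
  "E3 (\<lambda>w. (\<Sum>c\<in>sq k. dep_est w c * u c)\<^sup>2) \<le> beta * (\<Sum>c\<in>sq k. (u c)\<^sup>2)"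
proof -
  define A where "A z0 = (\<Sum>c\<in>sq k. u c * joint_est z0 c)" for z0
  define B where "B z1 z2 = (\<Sum>c\<in>sq k. u c * row_est z1 (fst c) * col_est z2 (snd c))" for z1 z2
  have pointwise: "(\<Sum>c\<in>sq k. dep_est w c * u c)\<^sup>2
      \<le> 2 * (\<lambda>(z0, z1, z2). (A z0)\<^sup>2) w + 2 * (\<lambda>(z0, z1, z2). (B z1 z2)\<^sup>2) w" for w
  proof -
    obtain z0 z1 z2 where w: "w = (z0, z1, z2)" by (cases w)
    have eq: "(\<Sum>c\<in>sq k. dep_est w c * u c) = A z0 - B z1 z2"
      by (simp add: w dep_est_def A_def B_def algebra_simps sum_subtractf)
    show ?thesis
      unfolding eq using zero_le_power2[of "A z0 + B z1 z2"] by (simp add: w power2_eq_square algebra_simps)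
  qed
  have "E3 (\<lambda>w. (\<Sum>c\<in>sq k. dep_est w c * u c)\<^sup>2)
      \<le> E3 (\<lambda>w. 2 * (\<lambda>(z0, z1, z2). (A z0)\<^sup>2) w + 2 * (\<lambda>(z0, z1, z2). (B z1 z2)\<^sup>2) w)"
    by (intro expect_mono triple_prob_nonneg pointwise)
  also have "\<dots> = 2 * Eout (\<lambda>z. (A z)\<^sup>2) + 2 * Eout (\<lambda>z1. Eout (\<lambda>z2. (B z1 z2)\<^sup>2))"
    by (simp only: expect_add expect_cmult E3_fst E3_snd_thd)
  also have "\<dots> \<le> 2 * ((1 + sigma2) * (\<Sum>c\<in>sq k. (u c)\<^sup>2)) + 2 * ((1 + sigma2)\<^sup>2 * (\<Sum>c\<in>sq k. (u c)\<^sup>2))"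
    unfolding A_def B_def
    by (intro add_mono mult_left_mono quadratic_joint_est_le quadratic_row_col_est_le) auto
  also have "\<dots> = beta * (\<Sum>c\<in>sq k. (u c)\<^sup>2)"
    by (simp add: beta_def algebra_simps)
  finally show ?thesis .
qed

lemma marg1_nonneg: "a < k \<Longrightarrow> 0 \<le> marg1 a"
  unfolding marg1_def by (intro sum_nonneg p_nonneg) auto

lemma marg2_nonneg: "b < k \<Longrightarrow> 0 \<le> marg2 b"
  unfolding marg2_def by (intro sum_nonneg p_nonneg) auto

lemma sum_marg1: "(\<Sum>a<k. marg1 a) = 1"
  using sum_p unfolding sum_sq marg1_def .

lemma sum_marg2: "(\<Sum>b<k. marg2 b) = 1"
  using sum_p unfolding sum_sq marg2_def by (subst sum.swap)

lemma product_eq_marginals: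
  assumes "is_product k p" and "c \<in> sq k"
  shows "p c = marg1 (fst c) * marg2 (snd c)"
proof -
  obtain q1 q2 where q: "is_dist {0..<k} q1" "is_dist {0..<k} q2"
    and pq: "\<forall>x1\<in>{0..<k}. \<forall>x2\<in>{0..<k}. p (x1, x2) = q1 x1 * q2 x2"
    using assms(1) unfolding is_product_def by blast
  have "(\<Sum>a<k. q1 a) = 1" "(\<Sum>b<k. q2 b) = 1"
    using q by (simp_all add: is_dist_def atLeast0LessThan)
  then have "marg1 a = q1 a" "marg2 b = q2 b" if "a < k" "b < k" for a b
    using that pq by (simp_all add: marg1_def marg2_def flip: sum_distrib_left sum_distrib_right)
  then show ?thesis
    using assms(2) pq by (cases c) auto
qed

lemma product_of_marginals:
  "is_dist (sq k) (\<lambda>c. marg1 (fst c) * marg2 (snd c)) \<and> is_product k (\<lambda>c. marg1 (fst c) * marg2 (snd c))"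
proof -
  have "(\<Sum>c\<in>sq k. marg1 (fst c) * marg2 (snd c)) = 1"
    unfolding sum_sq by (simp add: sum_marg1 sum_marg2 flip: sum_distrib_left)
  moreover have "is_dist {0..<k} marg1" "is_dist {0..<k} marg2"
    by (simp_all add: is_dist_def atLeast0LessThan marg1_nonneg marg2_nonneg sum_marg1 sum_marg2)
  moreover have "is_product k (\<lambda>c. marg1 (fst c) * marg2 (snd c))"
    unfolding is_product_def by (rule exI[of _ marg1], rule exI[of _ marg2]) (simp add: calculation(2,3))
  ultimately show ?thesis
    by (auto simp: is_dist_def marg1_nonneg marg2_nonneg)
qed

text \<open>By Cauchy-Schwarz over the \<open>k\<^sup>2\<close> cells, \<open>\<ell>\<^sub>1\<close>-distance \<open>2 \<gamma>\<close> forces \<open>\<ell>\<^sub>2\<close>-distance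
  \<open>2 \<gamma> / k\<close>.\<close>
lemma far_dist_ge:
  assumes "far_from_product k \<gamma> p" and "0 < \<gamma>" and "1 \<le> k"
  shows "4 * \<gamma>\<^sup>2 / (real k)\<^sup>2 \<le> (\<Sum>c\<in>sq k. (p c - marg1 (fst c) * marg2 (snd c))\<^sup>2)"
proof -
  let ?d = "\<lambda>c. p c - marg1 (fst c) * marg2 (snd c)"
  have "2 * \<gamma> < (\<Sum>c\<in>sq k. \<bar>?d c\<bar>)"
    using assms(1) product_of_marginals by (auto simp: far_from_product_def dtv_def)
  then have "(2 * \<gamma>)\<^sup>2 \<le> (\<Sum>c\<in>sq k. \<bar>?d c\<bar>)\<^sup>2"
    using assms(2) by (intro power_mono) auto
  also have "\<dots> \<le> (\<Sum>c\<in>sq k. (?d c)\<^sup>2) * (real k)\<^sup>2"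
    using sum_squared_le_sum_of_squares[of "\<lambda>c. \<bar>?d c\<bar>" "sq k"] by (simp add: power2_eq_square)
  finally show ?thesis
    using assms(3) by (simp add: power_mult_distrib pos_divide_le_eq)
qed

end

section \<open>The tester\<close>

lemma null_error_arith:
  fixes B K G M :: real
  assumes "0 < B" and "1 \<le> K" and "0 < G" and M: "48 * (B * K ^ 3 / G) \<le> M"
  shows "2 * B\<^sup>2 * K\<^sup>2 / (M\<^sup>2 * (2 * G / K\<^sup>2)\<^sup>2) \<le> 1 / 3"
proof -
  define X where "X = B * K ^ 3 / G"
  have X: "0 < X" using assms by (simp add: X_def)
  then have M0: "0 < M" using M unfolding X_def[symmetric] by linarith
  have "(48 * X)\<^sup>2 \<le> M\<^sup>2"
    using M X unfolding X_def[symmetric] by (intro power_mono) auto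
  then have "X\<^sup>2 / (2 * M\<^sup>2) \<le> 1 / 3"
    using M0 by (simp add: field_simps) (use zero_le_power2[of X] in linarith)
  moreover have "2 * B\<^sup>2 * K\<^sup>2 / (M\<^sup>2 * (2 * G / K\<^sup>2)\<^sup>2) = X\<^sup>2 / (2 * M\<^sup>2)"
    using assms M0 by (simp add: X_def field_simps power2_eq_square power3_eq_cube)
  ultimately show ?thesis by simp
qed

lemma alternative_error_linear_arith:
  fixes B K G M D :: real
  assumes "1 \<le> B" and "1 \<le> K" and "0 < G" and "0 < D" and DK: "1 / D \<le> K\<^sup>2 / (4 * G)"
    and M: "48 * (B * K ^ 3 / G) \<le> M" and "48 \<le> M"
  shows "16 * B * (M + 1) / (M\<^sup>2 * D) \<le> 1 / 6"
proof -
  have M0: "0 < M" using assms(7) by simp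
  have "16 * B * (M + 1) / (M\<^sup>2 * D) \<le> 32 * B / M * (1 / D)"
    using assms(1,4,7) by (simp add: field_simps power2_eq_square)
  also have "\<dots> \<le> 32 * B / M * (K\<^sup>2 / (4 * G))"
    using DK assms(1) M0 by (intro mult_left_mono) auto
  also have "\<dots> \<le> 8 * (B * K ^ 3 / G) / M"
  proof -
    have "K\<^sup>2 \<le> K ^ 3" using assms(2) by (simp add: power_increasing)
    then have "B * K\<^sup>2 / G \<le> B * K ^ 3 / G"
      using assms(1,3) by (intro divide_right_mono mult_left_mono) auto
    then show ?thesis
      using assms(3) M0 by (simp add: field_simps)
  qed
  also have "\<dots> \<le> 1 / 6"
    using M M0 assms(3) by (simp add: field_simps)
  finally show ?thesis .
qed

lemma alternative_error_quadratic_arith: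
  fixes B K G M D :: real
  assumes "0 < G" and "0 < D" and DK: "1 / D \<le> K\<^sup>2 / (4 * G)" and "1 \<le> K"
    and M: "48 * (B * K ^ 3 / G) \<le> M" and "0 < B * K ^ 3 / G"
  shows "8 * B\<^sup>2 * K\<^sup>2 / (M\<^sup>2 * D\<^sup>2) \<le> 1 / 6"
proof -
  define X where "X = B * K ^ 3 / G"
  have M0: "0 < M" using M assms(6) unfolding X_def[symmetric] by linarith
  have "(1 / D)\<^sup>2 \<le> (K\<^sup>2 / (4 * G))\<^sup>2"
    using DK assms(2) by (intro power_mono) auto
  then have "8 * B\<^sup>2 * K\<^sup>2 / M\<^sup>2 * (1 / D)\<^sup>2 \<le> 8 * B\<^sup>2 * K\<^sup>2 / M\<^sup>2 * (K\<^sup>2 / (4 * G))\<^sup>2"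
    by (intro mult_left_mono) auto
  also have "\<dots> = X\<^sup>2 / (2 * M\<^sup>2)"
    using assms(1,4) M0 by (simp add: X_def field_simps power2_eq_square power3_eq_cube)
  also have "\<dots> \<le> 1 / 6"
  proof -
    have "(48 * X)\<^sup>2 \<le> M\<^sup>2"
      using M assms(6) unfolding X_def[symmetric] by (intro power_mono) auto
    then show ?thesis
      using M0 by (simp add: field_simps) (use zero_le_power2[of X] in linarith)
  qed
  finally show ?thesis
    by (simp add: power_one_over field_simps)
qed

lemma alternative_error_arith:
  fixes B K G M D :: real
  assumes "1 \<le> B" and "1 \<le> K" and "0 < G" "G \<le> 1" and M: "48 * (B * K ^ 3 / G) \<le> M"
    and D: "2 * (2 * G / K\<^sup>2) \<le> D"
  shows "16 * B * (M + 1) / (M\<^sup>2 * D) + 8 * B\<^sup>2 * K\<^sup>2 / (M\<^sup>2 * D\<^sup>2) \<le> 1 / 3"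
proof -
  have "1 * 1 \<le> B * K ^ 3"
    using assms(1,2) by (intro mult_mono) (auto simp: one_le_power)
  then have X: "1 \<le> B * K ^ 3 / G"
    using assms(3,4) by (simp add: le_divide_eq)
  have pos: "0 < 4 * G / K\<^sup>2" using assms(2,3) by simp
  then have D0: "0 < D" using D by simp
  have DK: "1 / D \<le> K\<^sup>2 / (4 * G)"
    using le_imp_inverse_le[OF _ pos, of D] D by (simp add: inverse_eq_divide)
  have "48 \<le> M" using M X by linarith
  then show ?thesis
    using alternative_error_linear_arith[OF assms(1,2,3) D0 DK M]
      alternative_error_quadratic_arith[OF assms(3) D0 DK assms(2) M] X
    by simp
qed

lemma sample_size_arith:
  fixes k n :: nat and \<gamma> \<epsilon> B :: real
  assumes "2 \<le> k" and "0 < \<gamma>" "\<gamma> \<le> 1" and "0 < \<epsilon>" "\<epsilon> \<le> 1"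
    and n: "1100000 * real k ^ 3 / (\<gamma>\<^sup>2 * \<epsilon> ^ 4) \<le> real n"
    and B: "B \<le> 7396 / \<epsilon> ^ 4"
  shows "48 * (B * real k ^ 3 / \<gamma>\<^sup>2) \<le> real (n div 3) - 1"
proof -
  define Q where "Q = real k ^ 3 / (\<gamma>\<^sup>2 * \<epsilon> ^ 4)"
  have "1 \<le> Q"
  proof -
    have "1 \<le> real k ^ 3" using assms(1) by simp
    moreover have "\<gamma>\<^sup>2 * \<epsilon> ^ 4 \<le> 1" "0 < \<gamma>\<^sup>2 * \<epsilon> ^ 4"
      using assms(2-5) by (simp_all add: mult_le_one power_le_one)
    ultimately show ?thesis
      unfolding Q_def by (simp add: le_divide_eq)
  qed
  moreover have "real n \<le> 3 * real (n div 3) + 2"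
    by linarith
  moreover have "1100000 * Q \<le> real n"
    using n by (simp add: Q_def)
  moreover have "48 * (B * real k ^ 3 / \<gamma>\<^sup>2) \<le> 355008 * Q"
  proof -
    have "48 * (B * real k ^ 3 / \<gamma>\<^sup>2) \<le> 48 * (7396 / \<epsilon> ^ 4 * real k ^ 3 / \<gamma>\<^sup>2)"
      using B assms(2) by (intro mult_left_mono divide_right_mono mult_right_mono) auto
    also have "\<dots> = 355008 * Q"
      using assms(2,4) by (simp add: Q_def field_simps)
    finally show ?thesis .
  qed
  ultimately show ?thesis
    by linarith
qed

locale rr_tester = rr_population +
  fixes m :: nat

sublocale rr_tester \<subseteq> U: u_statistic "outputs \<times> outputs \<times> outputs" triple_prob m dep_est "sq k"
  by unfold_locales (simp_all add: sum_triple_prob triple_prob_nonneg)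

context rr_tester
begin

lemma accept_prob_tester:
  assumes "3 * m \<le> n"
  shows "accept_prob n (sq k) outputs p channel (tester m \<theta>) = U.EE (U.accepts \<theta>)"
proof -
  have "tester m \<theta> = (\<lambda>zs. U.accepts \<theta> (triples m zs))"
    unfolding tester_def test_stat_def U.accepts_def U.T_def U.K_def ..
  then show ?thesis
    using expect_triples[OF finite_outputs sum_output_prob assms, of "U.accepts \<theta>"]
    by (simp add: accept_prob_eq_expect output_prob_def triple_prob_def)
qed

lemma dep_mean_eq: "c \<in> sq k \<Longrightarrow> U.v c = p c - marg1 (fst c) * marg2 (snd c)"
  by (simp add: U.v_def mean_dep_est)

lemma dep_moment_le: "(\<Sum>c\<in>sq k. \<Sum>c'\<in>sq k. U.M c c' * u c * u c') \<le> beta * (\<Sum>c\<in>sq k. (u c)\<^sup>2)"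
  using U.E1_quadratic_form[of u] quadratic_dep_est_le[of u] by simp

lemma two_le_m:
  assumes "2 \<le> k" and "0 < \<gamma>" "\<gamma> \<le> 1" and m: "48 * (beta * real k ^ 3 / \<gamma>\<^sup>2) \<le> real m - 1"
  shows "2 \<le> m"
proof -
  have "1 \<le> real k ^ 3"
    using assms(1) by simp
  then have "1 * 1 \<le> beta * real k ^ 3"
    using one_le_beta by (intro mult_mono) auto
  moreover have "\<gamma>\<^sup>2 \<le> 1"
    using assms(2,3) by (simp add: power_le_one)
  ultimately have "1 \<le> beta * real k ^ 3 / \<gamma>\<^sup>2"
    using assms(2) by (simp add: le_divide_eq)
  then show ?thesis
    using m by linarith
qed

lemma product_accepted:
  assumes "is_product k p" and "3 * m \<le> n" and "2 \<le> k" and "0 < \<gamma>" "\<gamma> \<le> 1"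
    and m: "48 * (beta * real k ^ 3 / \<gamma>\<^sup>2) \<le> real m - 1"
  shows "2 / 3 \<le> accept_prob n (sq k) outputs p channel (tester m (2 * \<gamma>\<^sup>2 / (real k)\<^sup>2))"
proof -
  let ?\<theta> = "2 * \<gamma>\<^sup>2 / (real k)\<^sup>2"
  have "U.D = 0"
    using assms(1) by (simp add: U.D_def dep_mean_eq product_eq_marginals)
  then have "1 - U.EE (U.accepts ?\<theta>) \<le> 2 * beta\<^sup>2 * real (card (sq k)) / ((real m - 1)\<^sup>2 * ?\<theta>\<^sup>2)"
    using one_le_beta two_le_m[OF assms(3-6)] assms(3,4) by (intro U.null_rejection_le dep_moment_le) auto
  also have "\<dots> \<le> 1 / 3"
    using null_error_arith[of beta "real k" "\<gamma>\<^sup>2" "real m - 1"] one_le_beta assms(3,4) m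
    by (simp add: power2_eq_square)
  finally show ?thesis
    using accept_prob_tester[OF assms(2)] by simp
qed

lemma far_rejected:
  assumes "far_from_product k \<gamma> p" and "3 * m \<le> n" and "2 \<le> k" and "0 < \<gamma>" "\<gamma> \<le> 1"
    and m: "48 * (beta * real k ^ 3 / \<gamma>\<^sup>2) \<le> real m - 1"
  shows "2 / 3 \<le> 1 - accept_prob n (sq k) outputs p channel (tester m (2 * \<gamma>\<^sup>2 / (real k)\<^sup>2))"
proof -
  let ?\<theta> = "2 * \<gamma>\<^sup>2 / (real k)\<^sup>2"
  have D: "2 * ?\<theta> \<le> U.D"
    using far_dist_ge[OF assms(1,4)] assms(3) by (simp add: U.D_def dep_mean_eq)
  have "U.EE (U.accepts ?\<theta>) \<le> 16 * beta * real m / ((real m - 1)\<^sup>2 * U.D)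
      + 8 * beta\<^sup>2 * real (card (sq k)) / ((real m - 1)\<^sup>2 * U.D\<^sup>2)"
    using one_le_beta two_le_m[OF assms(3-6)] assms(3,4) by (intro U.alternative_acceptance_le D dep_moment_le) auto
  also have "\<dots> \<le> 1 / 3"
    using alternative_error_arith[of beta "real k" "\<gamma>\<^sup>2" "real m - 1" U.D] one_le_beta assms(3-5) m D
    by (simp add: power2_eq_square power_le_one mult_le_one)
  finally show ?thesis
    using accept_prob_tester[OF assms(2)] by simp
qed

end

lemma ldp_independence_tester:
  fixes k n :: nat and \<gamma> \<epsilon> :: real
  assumes k: "2 \<le> k" and \<gamma>: "0 < \<gamma>" "\<gamma> \<le> 1" and \<epsilon>: "0 < \<epsilon>" "\<epsilon> \<le> 1"
    and n: "1100000 * real k ^ 3 / (\<gamma>\<^sup>2 * \<epsilon> ^ 4) \<le> real n"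
  shows "\<exists>(Z::nat set) (W::nat \<times> nat \<Rightarrow> nat \<Rightarrow> real) (f::nat list \<Rightarrow> real).
          is_channel (sq k) Z W \<and> is_LDP \<epsilon> (sq k) Z W \<and> (\<forall>zs. 0 \<le> f zs \<and> f zs \<le> 1) \<and>
          (\<forall>p. is_dist (sq k) p \<and> is_product k p \<longrightarrow> 2 / 3 \<le> accept_prob n (sq k) Z p W f) \<and>
          (\<forall>p. is_dist (sq k) p \<and> far_from_product k \<gamma> p \<longrightarrow> 2 / 3 \<le> 1 - accept_prob n (sq k) Z p W f)"
proof -
  define r where "r = exp (\<epsilon> / 6)"
  interpret randomized_response k r
    using \<epsilon> by unfold_locales (simp add: r_def)
  define m where "m = n div 3"
  define \<theta> where "\<theta> = 2 * \<gamma>\<^sup>2 / (real k)\<^sup>2"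
  have m: "48 * (beta * real k ^ 3 / \<gamma>\<^sup>2) \<le> real m - 1"
    unfolding m_def using sample_size_arith[OF k \<gamma> \<epsilon> n beta_le[OF r_def \<epsilon>]] .
  have "3 * m \<le> n"
    by (simp add: m_def)
  have "2 / 3 \<le> accept_prob n (sq k) outputs p channel (tester m \<theta>)"
    if "is_dist (sq k) p" and "is_product k p" for p
  proof -
    interpret rr_tester k r p m
      using that(1) by unfold_locales
    show ?thesis
      unfolding \<theta>_def using product_accepted[OF that(2) \<open>3 * m \<le> n\<close> k \<gamma> m] .
  qed
  moreover have "2 / 3 \<le> 1 - accept_prob n (sq k) outputs p channel (tester m \<theta>)"
    if "is_dist (sq k) p" and "far_from_product k \<gamma> p" for p
  proof -
    interpret rr_tester k r p m
      using that(1) by unfold_locales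
    show ?thesis
      unfolding \<theta>_def using far_rejected[OF that(2) \<open>3 * m \<le> n\<close> k \<gamma> m] .
  qed
  ultimately show ?thesis
    using is_channel_channel is_LDP_channel[OF r_def]
    by (intro exI[of _ outputs] exI[of _ channel] exI[of _ "tester m \<theta>"]) (auto simp: tester_def)
qed

theorem theorem6p1:
  "\<exists>C::real. C > 0 \<and>
    (\<forall>(k::nat) (\<gamma>::real) (\<epsilon>::real) (n::nat).
       k \<ge> 2 \<and> 0 < \<gamma> \<and> \<gamma> \<le> 1 \<and> 0 < \<epsilon> \<and> \<epsilon> \<le> 1 \<and>
       real n \<ge> C * real k ^ 3 / (\<gamma>\<^sup>2 * \<epsilon> ^ 4) \<longrightarrow>
       (\<exists>(Z::nat set) (W::nat \<times> nat \<Rightarrow> nat \<Rightarrow> real) (f::nat list \<Rightarrow> real).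
          is_channel (sq k) Z W \<and> is_LDP \<epsilon> (sq k) Z W \<and>
          (\<forall>zs. 0 \<le> f zs \<and> f zs \<le> 1) \<and>
          (\<forall>p. is_dist (sq k) p \<and> is_product k p \<longrightarrow>
                accept_prob n (sq k) Z p W f \<ge> 2/3) \<and>
          (\<forall>p. is_dist (sq k) p \<and> far_from_product k \<gamma> p \<longrightarrow>
                1 - accept_prob n (sq k) Z p W f \<ge> 2/3)))"
  using ldp_independence_tester by (intro exI[of _ 1100000] conjI allI impI) (simp, blast)

end
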